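(* For every positive integer $k$, $$4k-2 < r_<(NM_k, K_3) \leq 6k.$$
   Context: An ordered graph on $[N]$ is a graph with vertex set $\{1,\dots,N\}$ equipped with the natural order. Given a red/blue coloring of the edges of the complete graph on $[N]$, a red (ordered) copy of an ordered graph $G$ on $[p]$ is a strictly increasing map $\varphi:[p]\to[N]$ such that $\varphi(u)\varphi(v)$ is red for every edge $uv$ of $G$. The ordered Ramsey number $r_<(G,K_3)$ is the smallest $N$ such that every red/blue coloring of the edges of the complete graph on $[N]$ contains either a red ordered copy of $G$ or a blue triangle. The nested matching $NM_k$ is the ordered graph on $[2k]$ in which $\{i,j\}$ is an edge if and only if $i+j=2k+1$. *)

theory Defs
  imports Main
begin

text \<open>A red/blue colouring of the edges of the complete graph on [N] is represented by
  a predicate c :: nat => nat => bool; the edge {x,y} (x /= y) is red iff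
  red_edge c x y holds, where the value c x y is only consulted for x < y.\<close>

definition red_edge :: "(nat \<Rightarrow> nat \<Rightarrow> bool) \<Rightarrow> nat \<Rightarrow> nat \<Rightarrow> bool" where
  "red_edge c x y = (if x < y then c x y else c y x)"

text \<open>An ordered graph G on [p] is given by its (symmetric) edge predicate E on {1..p}.\<close>

definition has_red_copy ::
  "nat \<Rightarrow> (nat \<Rightarrow> nat \<Rightarrow> bool) \<Rightarrow> nat \<Rightarrow> (nat \<Rightarrow> nat \<Rightarrow> bool) \<Rightarrow> bool" where
  "has_red_copy p E N c \<longleftrightarrow>
     (\<exists>\<phi>. strict_mono_on {1..p} \<phi> \<and> \<phi> ` {1..p} \<subseteq> {1..N} \<and>
        (\<forall>u\<in>{1..p}. \<forall>v\<in>{1..p}. E u v \<longrightarrow> red_edge c (\<phi> u) (\<phi> v)))"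

definition has_blue_triangle :: "nat \<Rightarrow> (nat \<Rightarrow> nat \<Rightarrow> bool) \<Rightarrow> bool" where
  "has_blue_triangle N c \<longleftrightarrow>
     (\<exists>x\<in>{1..N}. \<exists>y\<in>{1..N}. \<exists>z\<in>{1..N}. x < y \<and> y < z \<and>
        \<not> red_edge c x y \<and> \<not> red_edge c y z \<and> \<not> red_edge c x z)"

definition ordered_ramsey_K3 :: "nat \<Rightarrow> (nat \<Rightarrow> nat \<Rightarrow> bool) \<Rightarrow> nat" where
  "ordered_ramsey_K3 p E =
     (LEAST N. \<forall>c. has_red_copy p E N c \<or> has_blue_triangle N c)"

definition nested_matching :: "nat \<Rightarrow> nat \<Rightarrow> nat \<Rightarrow> bool" where
  "nested_matching k i j \<longleftrightarrow> i \<noteq> j \<and> i + j = 2 * k + 1"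

end

theory Submission
  imports Defs
begin

text \<open>Upper bound: if a colouring of [N] has no blue triangle, the blue neighbourhood of
  every vertex is a red clique, so without a red NM_k it has fewer than 2k vertices and there
  are at least N (N - 2k) ordered red pairs. Red edges with a common sum a + b are pairwise
  nested, so each of the 2N - 1 possible sums carries at most k - 1 red edges. For N \<ge> 6k these
  counts are incompatible.

  Lower bound: colour [N] red inside the blocks [1, 2k - 1] and [2k, N] and blue between them.
  The blue graph is bipartite, and for N \<le> 4k - 2 neither block contains two vertices 2k - 1
  apart, as the endpoints of the outermost edge of NM_k must be.\<close>

lemma red_edge_commute: "red_edge c x y = red_edge c y x"
  unfolding red_edge_def by auto

lemma has_blue_triangleI:
  assumes "x \<in> {1..N}" "y \<in> {1..N}" "z \<in> {1..N}" "x \<noteq> y" "y \<noteq> z" "x \<noteq> z"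
    and "\<not> red_edge c x y" "\<not> red_edge c y z" "\<not> red_edge c x z"
  shows "has_blue_triangle N c"
proof -
  consider "x < y" "y < z" | "x < z" "z < y" | "y < x" "x < z"
    | "y < z" "z < x" | "z < x" "x < y" | "z < y" "y < x"
    using assms(4-6) by linarith
  then show ?thesis
    unfolding has_blue_triangle_def using assms red_edge_commute[of c]
    by cases metis+
qed

lemma strict_mono_on_add_diff_le:
  fixes \<phi> :: "nat \<Rightarrow> nat"
  assumes "strict_mono_on {m..n} \<phi>" "m \<le> i" "i \<le> j" "j \<le> n"
  shows "\<phi> i + (j - i) \<le> \<phi> j"
  using assms(3,4)
proof (induction j rule: dec_induct)
  case (step j)
  have "\<phi> j < \<phi> (Suc j)"
    using step assms(2) by (intro strict_mono_onD[OF assms(1)]) auto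
  with step show ?case by simp
qed simp

lemma strict_mono_enumeration:
  fixes S :: "'a::linorder set"
  assumes "finite S" "p \<le> card S"
  obtains \<phi> where "strict_mono_on {1..p} \<phi>" "\<phi> ` {1..p} \<subseteq> S"
proof
  let ?l = "sorted_list_of_set S"
  have len: "length ?l = card S" and sorted: "sorted_wrt (<) ?l" and set: "set ?l = S"
    using assms(1) by simp_all
  show "strict_mono_on {1..p} (\<lambda>i. ?l ! (i - 1))"
    using assms(2) len by (intro strict_mono_onI sorted_wrt_nth_less[OF sorted]) auto
  show "(\<lambda>i. ?l ! (i - 1)) ` {1..p} \<subseteq> S"
  proof (rule image_subsetI)
    fix i assume "i \<in> {1..p}"
    then have "i - 1 < length ?l" using assms(2) len by auto
    then show "?l ! (i - 1) \<in> S" using set nth_mem by metis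
  qed
qed

lemma has_red_copy_if_red_clique:
  assumes irrefl: "\<And>u v. E u v \<Longrightarrow> u \<noteq> v"
    and S: "S \<subseteq> {1..N}" "p \<le> card S"
    and red: "\<forall>x\<in>S. \<forall>y\<in>S. x \<noteq> y \<longrightarrow> red_edge c x y"
  shows "has_red_copy p E N c"
proof -
  have "finite S" using S(1) finite_subset by blast
  then obtain \<phi> where mono: "strict_mono_on {1..p} \<phi>" and into: "\<phi> ` {1..p} \<subseteq> S"
    using strict_mono_enumeration S(2) by blast
  have "red_edge c (\<phi> u) (\<phi> v)" if "u \<in> {1..p}" "v \<in> {1..p}" "E u v" for u v
  proof -
    have "\<phi> u \<noteq> \<phi> v" using that irrefl strict_mono_on_eq[OF mono] by simp
    then show ?thesis using that into red by blast
  qed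
  then show ?thesis
    unfolding has_red_copy_def using mono into S(1) by blast
qed

definition mirror_extension :: "nat \<Rightarrow> nat \<Rightarrow> (nat \<Rightarrow> nat) \<Rightarrow> nat \<Rightarrow> nat" where
  "mirror_extension k s \<psi> i = (if i \<le> k then \<psi> i else s - \<psi> (2 * k + 1 - i))"

lemma mirror_extension_right:
  assumes "k < i" "i \<le> 2 * k"
  shows "mirror_extension k s \<psi> i = s - \<psi> (2 * k + 1 - i)" "2 * k + 1 - i \<in> {1..k}"
  using assms by (auto simp: mirror_extension_def)

lemma strict_mono_on_mirror_extension:
  assumes mono: "strict_mono_on {1..k} \<psi>" and below: "\<And>i. i \<in> {1..k} \<Longrightarrow> 2 * \<psi> i < s"
  shows "strict_mono_on {1..2 * k} (mirror_extension k s \<psi>)"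
proof (rule strict_mono_onI)
  fix i j assume ij: "i \<in> {1..2 * k}" "j \<in> {1..2 * k}" "i < j"
  consider "j \<le> k" | "i \<le> k" "k < j" | "k < i"
    using ij(3) by linarith
  then show "mirror_extension k s \<psi> i < mirror_extension k s \<psi> j"
  proof cases
    case 1
    then show ?thesis using ij strict_mono_onD[OF mono] by (simp add: mirror_extension_def)
  next
    case 2
    then show ?thesis
      using ij mirror_extension_right[of k j] below[of i] below[of "2 * k + 1 - j"]
      by (simp add: mirror_extension_def)
  next
    case 3
    then have "\<psi> (2 * k + 1 - j) < \<psi> (2 * k + 1 - i)"
      using ij by (intro strict_mono_onD[OF mono]) auto
    then show ?thesis
      using 3 ij mirror_extension_right[of k i] mirror_extension_right[of k j]
        below[of "2 * k + 1 - i"]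
      by (simp add: diff_less_mono2)
  qed
qed

lemma has_red_copy_nested_matching_if_common_sum:
  assumes A: "A \<subseteq> {1..N}" "k \<le> card A"
    and edges: "\<forall>a\<in>A. 2 * a < s \<and> s - a \<le> N \<and> red_edge c a (s - a)"
  shows "has_red_copy (2 * k) (nested_matching k) N c"
proof -
  have "finite A" using A(1) finite_subset by blast
  then obtain \<psi> where mono: "strict_mono_on {1..k} \<psi>" and into: "\<psi> ` {1..k} \<subseteq> A"
    using strict_mono_enumeration A(2) by blast
  let ?\<phi> = "mirror_extension k s \<psi>"
  have \<psi>: "1 \<le> \<psi> i" "2 * \<psi> i < s" "s - \<psi> i \<le> N" "red_edge c (\<psi> i) (s - \<psi> i)"
    if "i \<in> {1..k}" for i
  proof -
    have "\<psi> i \<in> A" using that into by blast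
    then show "1 \<le> \<psi> i" "2 * \<psi> i < s" "s - \<psi> i \<le> N" "red_edge c (\<psi> i) (s - \<psi> i)"
      using A(1) edges by auto
  qed
  have "?\<phi> i \<in> {1..N}" if "i \<in> {1..2 * k}" for i
  proof (cases "i \<le> k")
    case True
    then show ?thesis using that \<psi>(1-3)[of i] by (auto simp: mirror_extension_def)
  next
    case False
    then show ?thesis
      using that mirror_extension_right[of k i] \<psi>(2,3)[of "2 * k + 1 - i"] by simp
  qed
  moreover have "red_edge c (?\<phi> u) (?\<phi> v)"
    if "u \<in> {1..2 * k}" "v \<in> {1..2 * k}" "nested_matching k u v" for u v
  proof -
    have v: "v = 2 * k + 1 - u" using that by (auto simp: nested_matching_def)
    show ?thesis
    proof (cases "u \<le> k")
      case True
      then have "?\<phi> u = \<psi> u" "?\<phi> v = s - \<psi> u"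
        using v by (auto simp: mirror_extension_def)
      then show ?thesis using True that(1) \<psi>(4)[of u] by simp
    next
      case False
      then have "?\<phi> u = s - \<psi> v" "?\<phi> v = \<psi> v" "v \<in> {1..k}"
        using v that(1) by (auto simp: mirror_extension_def)
      then show ?thesis using \<psi>(4)[of v] red_edge_commute by simp
    qed
  qed
  ultimately show ?thesis
    using strict_mono_on_mirror_extension[OF mono \<psi>(2)]
    unfolding has_red_copy_def by blast
qed

lemma nested_matching_irrefl: "nested_matching k u v \<Longrightarrow> u \<noteq> v"
  by (simp add: nested_matching_def)

lemma card_blue_neighbours_less:
  assumes "\<not> has_red_copy (2 * k) (nested_matching k) N c" "\<not> has_blue_triangle N c"
    and a: "a \<in> {1..N}"
  shows "card {b \<in> {1..N}. b \<noteq> a \<and> \<not> red_edge c a b} < 2 * k"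
proof (rule ccontr)
  let ?B = "{b \<in> {1..N}. b \<noteq> a \<and> \<not> red_edge c a b}"
  assume "\<not> card ?B < 2 * k"
  then have card: "2 * k \<le> card ?B" by simp
  have clique: "\<forall>x\<in>?B. \<forall>y\<in>?B. x \<noteq> y \<longrightarrow> red_edge c x y"
  proof (intro ballI impI)
    fix x y assume "x \<in> ?B" "y \<in> ?B" "x \<noteq> y"
    show "red_edge c x y"
    proof (rule ccontr)
      assume "\<not> red_edge c x y"
      then have "has_blue_triangle N c"
        using \<open>x \<in> ?B\<close> \<open>y \<in> ?B\<close> \<open>x \<noteq> y\<close> a
        by (intro has_blue_triangleI[of a N x y c]) (auto simp: red_edge_commute[of c x a])
      with assms(2) show False ..
    qed
  qed
  have "has_red_copy (2 * k) (nested_matching k) N c"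
    by (rule has_red_copy_if_red_clique[OF nested_matching_irrefl _ card clique]) auto
  with assms(1) show False ..
qed

definition red_pairs :: "nat \<Rightarrow> (nat \<Rightarrow> nat \<Rightarrow> bool) \<Rightarrow> (nat \<times> nat) set" where
  "red_pairs N c = {(a, b). a \<in> {1..N} \<and> b \<in> {1..N} \<and> a \<noteq> b \<and> red_edge c a b}"

lemma finite_red_pairs: "finite (red_pairs N c)"
proof (rule finite_subset)
  show "red_pairs N c \<subseteq> {1..N} \<times> {1..N}"
    by (auto simp: red_pairs_def)
qed simp

lemma card_red_pairs_ge:
  assumes "\<not> has_red_copy (2 * k) (nested_matching k) N c" "\<not> has_blue_triangle N c"
  shows "N * (N - 2 * k) \<le> card (red_pairs N c)"
proof -
  define R where "R a = {b \<in> {1..N}. b \<noteq> a \<and> red_edge c a b}" for a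
  have "N - 2 * k \<le> card (R a)" if a: "a \<in> {1..N}" for a
  proof -
    let ?B = "{b \<in> {1..N}. b \<noteq> a \<and> \<not> red_edge c a b}"
    have "R a \<union> ?B = {1..N} - {a}" "R a \<inter> ?B = {}"
      unfolding R_def by auto
    then have "card (R a) + card ?B = N - 1"
      using a card_Un_disjoint[of "R a" ?B] by (simp add: R_def)
    then show ?thesis
      using card_blue_neighbours_less[OF assms a] by linarith
  qed
  then have "N * (N - 2 * k) \<le> (\<Sum>a\<in>{1..N}. card (R a))"
    using sum_bounded_below[of "{1..N}" "N - 2 * k" "\<lambda>a. card (R a)"] by simp
  also have "\<dots> = card (Sigma {1..N} R)"
    by (simp add: R_def)
  also have "Sigma {1..N} R = red_pairs N c"
    unfolding R_def red_pairs_def by auto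
  finally show ?thesis .
qed

lemma card_red_pairs_with_sum_le:
  assumes "\<not> has_red_copy (2 * k) (nested_matching k) N c"
  shows "card {p \<in> red_pairs N c. fst p + snd p = s} \<le> 2 * (k - 1)"
proof -
  define A where "A = {a \<in> {1..N}. 2 * a < s \<and> s - a \<le> N \<and> red_edge c a (s - a)}"
  have "A \<subseteq> {1..N}" "\<forall>a\<in>A. 2 * a < s \<and> s - a \<le> N \<and> red_edge c a (s - a)"
    by (auto simp: A_def)
  then have "\<not> k \<le> card A"
    using assms has_red_copy_nested_matching_if_common_sum by blast
  then have card_A: "card A \<le> k - 1" by linarith
  have "{p \<in> red_pairs N c. fst p + snd p = s} \<subseteq> (\<lambda>a. (a, s - a)) ` A \<union> (\<lambda>a. (s - a, a)) ` A"
  proof (rule subsetI)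
    fix p assume "p \<in> {p \<in> red_pairs N c. fst p + snd p = s}"
    then obtain a b where p: "p = (a, b)" and ab: "a \<in> {1..N}" "b \<in> {1..N}" "a \<noteq> b"
      "red_edge c a b" "a + b = s"
      by (auto simp: red_pairs_def)
    show "p \<in> (\<lambda>a. (a, s - a)) ` A \<union> (\<lambda>a. (s - a, a)) ` A"
    proof (cases "a < b")
      case True
      then have "a \<in> A" "p = (a, s - a)" using ab p by (auto simp: A_def)
      then show ?thesis by blast
    next
      case False
      then have "b \<in> A" "p = (s - b, b)" using ab p by (auto simp: A_def red_edge_commute)
      then show ?thesis by blast
    qed
  qed
  moreover have "finite A" by (simp add: A_def)
  ultimately have "card {p \<in> red_pairs N c. fst p + snd p = s}
      \<le> card ((\<lambda>a. (a, s - a)) ` A \<union> (\<lambda>a. (s - a, a)) ` A)"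
    by (intro card_mono) auto
  also have "\<dots> \<le> card ((\<lambda>a. (a, s - a)) ` A) + card ((\<lambda>a. (s - a, a)) ` A)"
    by (rule card_Un_le)
  also have "\<dots> \<le> card A + card A"
    by (intro add_mono card_image_le \<open>finite A\<close>)
  finally show ?thesis using card_A by linarith
qed

lemma card_red_pairs_le:
  assumes "\<not> has_red_copy (2 * k) (nested_matching k) N c"
  shows "card (red_pairs N c) \<le> (2 * N - 1) * (2 * (k - 1))"
proof -
  let ?P = "\<lambda>s. {p \<in> red_pairs N c. fst p + snd p = s}"
  have "red_pairs N c \<subseteq> (\<Union>s\<in>{2..2 * N}. ?P s)"
    by (force simp: red_pairs_def)
  then have "card (red_pairs N c) \<le> card (\<Union>s\<in>{2..2 * N}. ?P s)"
    by (intro card_mono) (auto simp: finite_red_pairs)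
  also have "\<dots> \<le> (\<Sum>s\<in>{2..2 * N}. card (?P s))"
    by (rule card_UN_le) (simp add: finite_red_pairs)
  also have "\<dots> \<le> card {2..2 * N} * (2 * (k - 1))"
    using sum_bounded_above[of "{2..2 * N}" "\<lambda>s. card (?P s)"]
      card_red_pairs_with_sum_le[OF assms] by simp
  finally show ?thesis by simp
qed

theorem red_nested_matching_or_blue_triangle:
  assumes "1 \<le> k" "6 * k \<le> N"
  shows "has_red_copy (2 * k) (nested_matching k) N c \<or> has_blue_triangle N c"
proof (rule ccontr)
  assume "\<not> ?thesis"
  then have "N * (N - 2 * k) \<le> (2 * N - 1) * (2 * (k - 1))"
    using card_red_pairs_ge card_red_pairs_le le_trans by blast
  also have "\<dots> < 2 * N * (2 * k)"
    using assms by (intro mult_le_less_imp_less) auto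
  also have "\<dots> \<le> N * (N - 2 * k)"
    using assms by simp
  finally show False by simp
qed

definition two_block_colouring :: "nat \<Rightarrow> nat \<Rightarrow> nat \<Rightarrow> bool" where
  "two_block_colouring m x y \<longleftrightarrow> (x < m \<longleftrightarrow> y < m)"

lemma red_edge_two_block_colouring:
  "red_edge (two_block_colouring m) x y \<longleftrightarrow> (x < m \<longleftrightarrow> y < m)"
  by (auto simp: red_edge_def two_block_colouring_def)

lemma no_blue_triangle_two_block_colouring:
  "\<not> has_blue_triangle N (two_block_colouring m)"
  by (auto simp: has_blue_triangle_def red_edge_two_block_colouring)

lemma no_red_nested_matching_two_block_colouring:
  assumes "1 \<le> k" "N \<le> 4 * k - 2"
  shows "\<not> has_red_copy (2 * k) (nested_matching k) N (two_block_colouring (2 * k))"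
proof
  assume "has_red_copy (2 * k) (nested_matching k) N (two_block_colouring (2 * k))"
  then obtain \<phi> where mono: "strict_mono_on {1..2 * k} \<phi>" and into: "\<phi> ` {1..2 * k} \<subseteq> {1..N}"
    and red: "\<forall>u\<in>{1..2 * k}. \<forall>v\<in>{1..2 * k}. nested_matching k u v \<longrightarrow>
      red_edge (two_block_colouring (2 * k)) (\<phi> u) (\<phi> v)"
    unfolding has_red_copy_def by blast
  have "nested_matching k 1 (2 * k)"
    using assms(1) by (simp add: nested_matching_def)
  then have "\<phi> 1 < 2 * k \<longleftrightarrow> \<phi> (2 * k) < 2 * k"
    using red assms(1) by (simp add: red_edge_two_block_colouring)
  moreover have "\<phi> 1 + (2 * k - 1) \<le> \<phi> (2 * k)"
    using strict_mono_on_add_diff_le[OF mono, of 1 "2 * k"] assms(1) by simp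
  moreover have "\<phi> 1 \<in> {1..N}" "\<phi> (2 * k) \<in> {1..N}"
    using into assms(1) by (auto simp: image_subset_iff)
  ultimately show False
    using assms by auto
qed

lemma ordered_ramsey_K3_le:
  assumes "\<forall>c. has_red_copy p E N c \<or> has_blue_triangle N c"
  shows "ordered_ramsey_K3 p E \<le> N"
  unfolding ordered_ramsey_K3_def using assms by (rule Least_le)

lemma less_ordered_ramsey_K3:
  assumes "\<forall>c. has_red_copy p E M c \<or> has_blue_triangle M c"
    and "\<And>N'. N' \<le> N \<Longrightarrow> \<exists>c. \<not> has_red_copy p E N' c \<and> \<not> has_blue_triangle N' c"
  shows "N < ordered_ramsey_K3 p E"
proof -
  have "\<forall>c. has_red_copy p E (ordered_ramsey_K3 p E) c \<or> has_blue_triangle (ordered_ramsey_K3 p E) c"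
    unfolding ordered_ramsey_K3_def using assms(1) by (rule LeastI)
  with assms(2) show ?thesis
    by (meson not_le)
qed

theorem proposition2p1:
  fixes k :: nat
  assumes "k \<ge> 1"
  shows "4 * k - 2 < ordered_ramsey_K3 (2 * k) (nested_matching k)
         \<and> ordered_ramsey_K3 (2 * k) (nested_matching k) \<le> 6 * k"
proof
  have upper: "\<forall>c. has_red_copy (2 * k) (nested_matching k) (6 * k) c \<or> has_blue_triangle (6 * k) c"
    using red_nested_matching_or_blue_triangle assms by simp
  then show "4 * k - 2 < ordered_ramsey_K3 (2 * k) (nested_matching k)"
    using no_red_nested_matching_two_block_colouring[OF assms]
      no_blue_triangle_two_block_colouring
    by (intro less_ordered_ramsey_K3) blast+
  show "ordered_ramsey_K3 (2 * k) (nested_matching k) \<le> 6 * k"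
    using upper by (rule ordered_ramsey_K3_le)
qed

end
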